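(* Let $t=(k_1,\dots,k_l)$ be a parameter tuple of length $l\in\mathbb{N}$, let $m\in\mathbb{N}_0$ and $s\in\mathbb{R}$ with $s>1$. Then $$\mathrm{vdW}_{m+l}(\underbrace{2,\dots,2}_{m},k_1,\dots,k_l)\le\max\big(s\cdot m+1,\ \mathrm{cr}_{\mathrm{ap}}(t,1-\tfrac1s)\big).$$
   Context: A parameter tuple is a non-decreasing tuple $(k_1,\dots,k_r)$ of integers $k_i\ge2$. An arithmetic progression of size $k$ in $\mathbb{N}$ is a $k$-element set $P\subset\mathbb{N}$ such that, in natural order, consecutive elements always have the same distance (for $k>1$: sets $\{a+id: i=0,\dots,k-1\}$ with $a,d\in\mathbb{N}$). For a parameter tuple $(k_1,\dots,k_r)$, the van der Waerden number $\mathrm{vdW}_r(k_1,\dots,k_r)$ is the smallest $n_0\in\mathbb{N}$ such that for every $n\ge n_0$ and every $f:\{1,\dots,n\}\to\{1,\dots,r\}$ there is $i$ such that $f^{-1}(i)$ contains an arithmetic progression of size $k_i$. Let $\mathrm{ap}(k,n)$ be the hypergraph with vertex set $\{1,\dots,n\}$ whose hyperedges are the arithmetic progressions of size $k$ in $\{1,\dots,n\}$. For $q>0$, $\mathrm{cr}_{\mathrm{ap}}(t,q)\in\mathbb{N}\cup\{+\infty\}$ is the infimum of all $n\in\mathbb{N}$ such that for all $n'\ge n$ and all pairwise disjoint $S_1,\dots,S_l\subseteq\{1,\dots,n'\}$ with $S_i$ containing no arithmetic progression of size $k_i$, we have $\frac{|S_1|+\dots+|S_l|}{n'}<q$ (infimum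 of the empty set is $+\infty$). *)

theory Defs
  imports Complex_Main "HOL-Library.Extended_Real"
begin

definition param_tuple :: "nat list \<Rightarrow> bool" where
  "param_tuple ks \<longleftrightarrow> sorted ks \<and> (\<forall>k\<in>set ks. k \<ge> 2)"

definition is_ap :: "nat \<Rightarrow> nat set \<Rightarrow> bool" where
  "is_ap k P \<longleftrightarrow> card P = k \<and> (\<exists>a d. d \<ge> 1 \<and> P = {a + i * d | i. i < k})"

definition has_ap :: "nat \<Rightarrow> nat set \<Rightarrow> bool" where
  "has_ap k S \<longleftrightarrow> (\<exists>P. P \<subseteq> S \<and> is_ap k P)"

text \<open>Van der Waerden number for the parameter tuple ks (colour i, 1-based, gets ks!(i-1)).
  Infimum in enat; it is infinite iff no such n0 exists.\<close>
definition vdW :: "nat list \<Rightarrow> enat" where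
  "vdW ks = Inf (enat ` {n0. \<forall>n\<ge>n0. \<forall>f :: nat \<Rightarrow> nat. f ` {1..n} \<subseteq> {1..length ks} \<longrightarrow>
      (\<exists>i\<in>{1..length ks}. has_ap (ks ! (i - 1)) ({x\<in>{1..n}. f x = i}))})"

definition cr_ap :: "nat list \<Rightarrow> real \<Rightarrow> enat" where
  "cr_ap t q = Inf (enat ` {n. n \<ge> 1 \<and> (\<forall>n'\<ge>n. \<forall>S :: nat \<Rightarrow> nat set.
      ((\<forall>i<length t. S i \<subseteq> {1..n'} \<and> \<not> has_ap (t ! i) (S i)) \<and>
       (\<forall>i<length t. \<forall>j<length t. i \<noteq> j \<longrightarrow> S i \<inter> S j = {}))
      \<longrightarrow> real (\<Sum>i<length t. card (S i)) / real n' < q)})"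

end

theory Submission
  imports Defs
begin

text \<open>Suppose \<open>n \<ge> max (s m + 1, cr_ap(t, 1 - 1/s))\<close> and colour \<open>{1..n}\<close> with the \<open>m + l\<close>
  colours avoiding every forbidden progression. Each of the first \<open>m\<close> colour classes contains
  no two elements, so together they cover at most \<open>m\<close> points; the remaining \<open>l\<close> classes are
  disjoint and free of progressions of sizes \<open>k\<^sub>1, \<dots>, k\<^sub>l\<close>, so by the choice of
  \<open>cr_ap\<close> they cover fewer than \<open>(1 - 1/s) n\<close> points. Hence \<open>n < m + (1 - 1/s) n\<close>,
  i.e. \<open>n < s m\<close>, a contradiction.\<close>

lemma has_ap_2I:
  assumes "a \<in> S" "b \<in> S" "a < b"
  shows "has_ap 2 S"
proof -
  have "is_ap 2 {a, b}"
    unfolding is_ap_def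
  proof (intro conjI exI)
    show "card {a, b} = 2" and "1 \<le> b - a"
      using \<open>a < b\<close> by auto
    show "{a, b} = {a + i * (b - a) | i. i < 2}"
      using \<open>a < b\<close> by (auto simp: less_2_cases_iff intro: exI[of _ "Suc 0"])
  qed
  moreover have "{a, b} \<subseteq> S"
    using assms by simp
  ultimately show ?thesis
    unfolding has_ap_def by (intro exI[of _ "{a, b}"] conjI)
qed

lemma card_le_1_if_not_has_ap_2:
  assumes "finite S" "\<not> has_ap 2 S"
  shows "card S \<le> 1"
proof -
  have "\<forall>a\<in>S. \<forall>b\<in>S. a = b"
    using assms(2) has_ap_2I linorder_neqE_nat by metis
  then show ?thesis
    using card_le_Suc0_iff_eq[OF \<open>finite S\<close>] by simp
qed

lemma card_eq_sum_card_colour_classes: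
  fixes f :: "nat \<Rightarrow> nat"
  assumes "f ` A \<subseteq> C" "finite A" "finite C"
  shows "card A = (\<Sum>i\<in>C. card {x\<in>A. f x = i})"
proof -
  have "A = (\<Union>i\<in>C. {x\<in>A. f x = i})"
    using assms(1) by auto
  also have "card \<dots> = (\<Sum>i\<in>C. card {x\<in>A. f x = i})"
    using assms(2,3) by (intro card_UN_disjoint) auto
  finally show ?thesis .
qed

lemma mem_of_Inf_image_enat_eq:
  assumes "Inf (enat ` C) = enat c"
  shows "c \<in> C"
proof -
  have "enat ` C \<noteq> {}"
    using assms by (auto simp: top_enat_def)
  then have "Inf (enat ` C) \<in> enat ` C"
    by (meson ex_in_conv wellorder_InfI)
  with assms show ?thesis
    by auto
qed

lemma cr_ap_density_bound:
  assumes "cr_ap t q = enat c" "c \<le> n"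
    and "\<forall>i<length t. S i \<subseteq> {1..n} \<and> \<not> has_ap (t ! i) (S i)"
    and "\<forall>i<length t. \<forall>j<length t. i \<noteq> j \<longrightarrow> S i \<inter> S j = {}"
  shows "real (\<Sum>i<length t. card (S i)) < q * real n"
proof -
  have "c \<ge> 1 \<and> (\<forall>n'\<ge>c. \<forall>S :: nat \<Rightarrow> nat set.
      ((\<forall>i<length t. S i \<subseteq> {1..n'} \<and> \<not> has_ap (t ! i) (S i)) \<and>
       (\<forall>i<length t. \<forall>j<length t. i \<noteq> j \<longrightarrow> S i \<inter> S j = {}))
      \<longrightarrow> real (\<Sum>i<length t. card (S i)) / real n' < q)"
    using mem_of_Inf_image_enat_eq[OF assms(1)[unfolded cr_ap_def]] by (rule CollectD)
  then have "real (\<Sum>i<length t. card (S i)) / real n < q" and "n \<ge> 1"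
    using assms(2-4) by (fastforce dest: spec[of _ n] spec[of _ S])+
  then show ?thesis
    by (simp add: divide_less_eq)
qed

lemma vdW_le_enat:
  assumes "\<And>n f. N \<le> n \<Longrightarrow> f ` {1..n} \<subseteq> {1..length ks} \<Longrightarrow>
    \<exists>i\<in>{1..length ks}. has_ap (ks ! (i - 1)) {x\<in>{1..n}. f x = i}"
  shows "vdW ks \<le> enat N"
  unfolding vdW_def using assms by (intro Inf_lower imageI) blast

lemma colouring_has_forbidden_ap:
  fixes f :: "nat \<Rightarrow> nat"
  assumes cr: "cr_ap t (1 - 1 / s) = enat c" and "s > 0" "c \<le> n" "s * real m < real n"
    and f: "f ` {1..n} \<subseteq> {1..m + length t}"
  shows "\<exists>i\<in>{1..m + length t}. has_ap ((replicate m 2 @ t) ! (i - 1)) {x\<in>{1..n}. f x = i}"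
proof (rule ccontr)
  let ?ks = "replicate m 2 @ t"
  define A where "A i = {x\<in>{1..n}. f x = i}" for i
  assume "\<not> ?thesis"
  then have no_ap: "\<not> has_ap (?ks ! (i - 1)) (A i)" if "i \<in> {1..m + length t}" for i
    using that unfolding A_def by blast
  have "n = (\<Sum>i\<in>{1..m + length t}. card (A i))"
    using card_eq_sum_card_colour_classes[OF f] unfolding A_def by simp
  also have "\<dots> = (\<Sum>i\<in>{1..m}. card (A i)) + (\<Sum>i<length t. card (A (m + 1 + i)))"
  proof -
    have "(\<Sum>i\<in>{m + 1..m + length t}. card (A i)) = (\<Sum>i<length t. card (A (m + 1 + i)))"
      by (rule sum.reindex_bij_witness[where i="\<lambda>i. m + 1 + i" and j="\<lambda>i. i - (m + 1)"]) auto
    then show ?thesis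
      using sum.ub_add_nat[of 1 m "\<lambda>i. card (A i)" "length t"] by simp
  qed
  finally have n_split: "n = (\<Sum>i\<in>{1..m}. card (A i)) + (\<Sum>i<length t. card (A (m + 1 + i)))" .
  have "card (A i) \<le> 1" if "i \<in> {1..m}" for i
  proof (rule card_le_1_if_not_has_ap_2)
    show "finite (A i)"
      by (simp add: A_def)
    have "?ks ! (i - 1) = 2"
      using that by (auto simp: nth_append)
    then show "\<not> has_ap 2 (A i)"
      using no_ap[of i] that by simp
  qed
  then have "(\<Sum>i\<in>{1..m}. card (A i)) \<le> m"
    using sum_mono[of "{1..m}" "\<lambda>i. card (A i)" "\<lambda>_. 1"] by simp
  moreover have "real (\<Sum>i<length t. card (A (m + 1 + i))) < (1 - 1 / s) * real n"
    using cr \<open>c \<le> n\<close>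
  proof (rule cr_ap_density_bound)
    show "\<forall>i<length t. A (m + 1 + i) \<subseteq> {1..n} \<and> \<not> has_ap (t ! i) (A (m + 1 + i))"
    proof (intro allI impI conjI)
      fix i
      assume "i < length t"
      show "A (m + 1 + i) \<subseteq> {1..n}"
        by (auto simp: A_def)
      have "?ks ! (m + 1 + i - 1) = t ! i"
        by (simp add: nth_append)
      then show "\<not> has_ap (t ! i) (A (m + 1 + i))"
        using no_ap[of "m + 1 + i"] \<open>i < length t\<close> by simp
    qed
    show "\<forall>i<length t. \<forall>j<length t. i \<noteq> j \<longrightarrow> A (m + 1 + i) \<inter> A (m + 1 + j) = {}"
      by (auto simp: A_def)
  qed
  ultimately have "real n < real m + (1 - 1 / s) * real n"
    using n_split by linarith
  then have "real n < s * real m"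
    using \<open>s > 0\<close> by (simp add: field_simps)
  with \<open>s * real m < real n\<close> show False
    by linarith
qed

theorem corollary1:
  fixes t :: "nat list" and m :: nat and s :: real
  assumes "param_tuple t" and "length t \<ge> 1" and "s > 1"
  shows "ereal_of_enat (vdW (replicate m 2 @ t))
           \<le> max (ereal (s * real m + 1)) (ereal_of_enat (cr_ap t (1 - 1 / s)))"
proof (cases "cr_ap t (1 - 1 / s)")
  case (enat c)
  define N where "N = max (nat \<lfloor>s * real m\<rfloor> + 1) c"
  have sm_bounds: "s * real m < real (nat \<lfloor>s * real m\<rfloor> + 1)" "real (nat \<lfloor>s * real m\<rfloor> + 1) \<le> s * real m + 1"
    using \<open>s > 1\<close> by (simp_all, linarith+)
  have "vdW (replicate m 2 @ t) \<le> enat N"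
  proof (rule vdW_le_enat)
    fix n and f :: "nat \<Rightarrow> nat"
    assume "N \<le> n" "f ` {1..n} \<subseteq> {1..length (replicate m 2 @ t)}"
    then show "\<exists>i\<in>{1..length (replicate m 2 @ t)}.
        has_ap ((replicate m 2 @ t) ! (i - 1)) {x\<in>{1..n}. f x = i}"
      using colouring_has_forbidden_ap[OF enat] \<open>s > 1\<close> sm_bounds unfolding N_def by auto
  qed
  then have "ereal_of_enat (vdW (replicate m 2 @ t)) \<le> ereal (real N)"
    by (metis ereal_of_enat_le_iff ereal_of_enat_simps(1))
  also have "\<dots> \<le> max (ereal (s * real m + 1)) (ereal (real c))"
    using sm_bounds unfolding N_def by (auto simp: max_def)
  finally show ?thesis
    using enat by simp
qed simp

end
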